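(* Let $\Gamma$ be a weighted digraph with vertex set $V(\Gamma)=\{1,\dots,n\}$, $n>1$, without loops and with strictly positive arc weights, and let $\widehat\Gamma$ be its ground extension. Let $0\le k\le n$ and let $\mathcal I=\{i_1,\dots,i_k\}\subseteq V(\Gamma)$, $\mathcal J=\{j_1,\dots,j_k\}\subseteq V(\Gamma)$. Let $A$ be the set of in-forests of $\Gamma$ in which, for every $u=1,\dots,k$, the vertex $i_u$ belongs to the tree whose root is $j_u$. Let $B$ be the set of in-forests $F$ of $\widehat\Gamma$ consisting of exactly $k+1$ trees such that $0$ is the root of the tree containing $0$ and, for every $u=1,\dots,k$, $i_u$ belongs to the tree of $F$ whose root is $j_u$. Then there is a weight-preserving bijection between $A$ and $B$.
   Context: $W=(w_{ij})$ is the matrix of arc weights ($w_{ij}>0$ iff there is an arc $i\to j$, else $0$). The weight of a subgraph is the product of its arc weights (1 if no arcs). A converging tree is a weakly connected digraph with one vertex (the root) of outdegree 0 and all others of outdegree 1; an in-forest of a digraph is a spanning subgraph whose weak components are converging trees. The ground extension $\widehat\Gamma$ of $\Gamma$ is the weighted digraph with vertex set $V(\Gamma)\cup\{0\}$, arc set $E(\Gamma)\cup\{(j,0):j\in V(\Gamma)\}$, the arcs of $\Gamma$ keeping their weights and each arc $(j,0)$ having weight 1. *)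

theory Defs
  imports Complex_Main
begin

definition out_deg :: "('a \<times> 'a) set \<Rightarrow> 'a \<Rightarrow> nat" where
  "out_deg T v = card {w. (v, w) \<in> T}"

definition wcomp_rel :: "'a set \<Rightarrow> ('a \<times> 'a) set \<Rightarrow> ('a \<times> 'a) set" where
  "wcomp_rel V F = {(x, y). x \<in> V \<and> y \<in> V \<and> (x, y) \<in> (F \<union> F\<inverse>)\<^sup>*}"

definition converging_tree :: "'a set \<Rightarrow> ('a \<times> 'a) set \<Rightarrow> bool" where
  "converging_tree C T \<longleftrightarrow> C \<noteq> {} \<and> T \<subseteq> C \<times> C \<and>
     (\<forall>x\<in>C. \<forall>y\<in>C. (x, y) \<in> (T \<union> T\<inverse>)\<^sup>*) \<and>
     (\<exists>r\<in>C. out_deg T r = 0 \<and> (\<forall>v\<in>C - {r}. out_deg T v = 1))"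

definition in_forest :: "'a set \<Rightarrow> ('a \<times> 'a) set \<Rightarrow> ('a \<times> 'a) set \<Rightarrow> bool" where
  "in_forest V E F \<longleftrightarrow> F \<subseteq> E \<and>
     (\<forall>C \<in> V // wcomp_rel V F. converging_tree C (F \<inter> (C \<times> C)))"

definition in_tree_with_root :: "'a set \<Rightarrow> ('a \<times> 'a) set \<Rightarrow> 'a \<Rightarrow> 'a \<Rightarrow> bool" where
  "in_tree_with_root V F i r \<longleftrightarrow> (i, r) \<in> wcomp_rel V F \<and> out_deg F r = 0"

definition num_trees :: "'a set \<Rightarrow> ('a \<times> 'a) set \<Rightarrow> nat" where
  "num_trees V F = card (V // wcomp_rel V F)"

definition arcs_of :: "nat set \<Rightarrow> (nat \<Rightarrow> nat \<Rightarrow> real) \<Rightarrow> (nat \<times> nat) set" where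
  "arcs_of V W = {(i, j). i \<in> V \<and> j \<in> V \<and> W i j > 0}"

definition sg_weight :: "(nat \<Rightarrow> nat \<Rightarrow> real) \<Rightarrow> (nat \<times> nat) set \<Rightarrow> real" where
  "sg_weight W F = (\<Prod>(i, j)\<in>F. W i j)"

definition ground_vertices :: "nat set \<Rightarrow> nat set" where
  "ground_vertices V = insert 0 V"

definition ground_arcs :: "nat set \<Rightarrow> (nat \<Rightarrow> nat \<Rightarrow> real) \<Rightarrow> (nat \<times> nat) set" where
  "ground_arcs V W = arcs_of V W \<union> {(j, 0) | j. j \<in> V}"

definition ground_weight :: "(nat \<Rightarrow> nat \<Rightarrow> real) \<Rightarrow> nat \<Rightarrow> nat \<Rightarrow> real" where
  "ground_weight W i j = (if j = 0 then 1 else W i j)"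

end

theory Submission
  imports Defs
begin

text \<open>
  Attach every root r of an in-forest F of the digraph that is not one of the prescribed roots
  j_u to the new vertex 0 by the arc (r, 0), of weight 1. The result is an in-forest of the
  ground extension of the same weight whose roots are 0 and the j_u, hence with k + 1 trees,
  and a vertex of the digraph lies in the tree of j_u in one forest iff it does in the other.
  Conversely, deleting the arcs into 0 from a forest of the second set gives a forest of the
  first one; as its k + 1 roots include 0 and the k distinct j_u, they are exactly these, so
  attaching recovers the deleted arcs.

  In-forests are handled in functional form: a subgraph is an in-forest iff every vertex has at
  most one out-arc and following out-arcs from any vertex leads to a root.
\<close>

section \<open>Weak connectivity and out-degrees\<close>

abbreviation wconn :: "('a \<times> 'a) set \<Rightarrow> ('a \<times> 'a) set" where
  "wconn F \<equiv> (F \<union> F\<inverse>)\<^sup>*"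

lemma wconn_sym:
  assumes "(x, y) \<in> wconn F"
  shows "(y, x) \<in> wconn F"
proof -
  have "sym (wconn F)"
    by (rule sym_rtrancl) (auto simp: sym_def)
  then show ?thesis
    using assms by (rule symD)
qed

lemma wconn_Image_eq:
  assumes "(x, y) \<in> wconn F"
  shows "wconn F `` {x} = wconn F `` {y}"
proof (intro set_eqI iffI)
  fix z
  assume "z \<in> wconn F `` {x}"
  then show "z \<in> wconn F `` {y}"
    using rtrancl_trans[OF wconn_sym[OF assms]] by simp
next
  fix z
  assume "z \<in> wconn F `` {y}"
  then show "z \<in> wconn F `` {x}"
    using rtrancl_trans[OF assms] by simp
qed

lemma rtrancl_subset_wconn: "F\<^sup>* \<subseteq> wconn F"
  by (rule rtrancl_mono) blast

lemma wconn_closed: "(x, y) \<in> wconn F \<Longrightarrow> F \<subseteq> V \<times> V \<Longrightarrow> x \<in> V \<Longrightarrow> y \<in> V"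
  by (induction rule: rtrancl_induct) auto

lemma single_valued_wconn_common_descendant:
  assumes sv: "single_valued F" and "(x, y) \<in> wconn F"
  shows "\<exists>z. (x, z) \<in> F\<^sup>* \<and> (y, z) \<in> F\<^sup>*"
  using \<open>(x, y) \<in> wconn F\<close>
proof (induction rule: rtrancl_induct)
  case base
  then show ?case by blast
next
  case (step y w)
  then obtain z where xz: "(x, z) \<in> F\<^sup>*" and yz: "(y, z) \<in> F\<^sup>*" by blast
  show ?case
  proof (cases "(y, w) \<in> F")
    case True
    from yz show ?thesis
    proof (cases rule: converse_rtranclE)
      case base
      then show ?thesis using xz True by (meson rtrancl.rtrancl_into_rtrancl rtrancl.rtrancl_refl)
    next
      case (step a)
      then have "a = w" using sv True by (auto dest: single_valuedD)
      then show ?thesis using xz step by auto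
    qed
  next
    case False
    then have "(w, y) \<in> F" using step by auto
    then show ?thesis using xz yz by (meson converse_rtrancl_into_rtrancl)
  qed
qed

lemma rtrancl_from_sink: "(r, z) \<in> F\<^sup>* \<Longrightarrow> r \<notin> Domain F \<Longrightarrow> z = r"
  by (erule converse_rtranclE) auto

lemma single_valued_wconn_to_sink:
  assumes "single_valued F" and "(x, r) \<in> wconn F" and "r \<notin> Domain F"
  shows "(x, r) \<in> F\<^sup>*"
proof -
  obtain z where "(x, z) \<in> F\<^sup>*" and "(r, z) \<in> F\<^sup>*"
    using single_valued_wconn_common_descendant[OF assms(1,2)] by blast
  moreover from \<open>(r, z) \<in> F\<^sup>*\<close> have "z = r"
    using assms(3) by (rule rtrancl_from_sink)
  ultimately show ?thesis by simp
qed

lemma single_valued_wconn_sinks_eq: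
  assumes "single_valued F" and "(x, y) \<in> wconn F" and "x \<notin> Domain F" and "y \<notin> Domain F"
  shows "x = y"
  using rtrancl_from_sink[OF single_valued_wconn_to_sink[OF assms(1,2,4)] assms(3)] by simp

lemma finite_successors: "finite F \<Longrightarrow> finite {w. (v, w) \<in> F}"
  by (rule finite_subset[OF _ finite_Range]) auto

lemma out_deg_eq_0_iff: "finite F \<Longrightarrow> out_deg F v = 0 \<longleftrightarrow> v \<notin> Domain F"
  using finite_successors[of F v] by (auto simp: out_deg_def)

lemma single_valued_iff_out_deg_le_1:
  assumes "finite F"
  shows "single_valued F \<longleftrightarrow> (\<forall>v. out_deg F v \<le> 1)"
proof -
  have "out_deg F v \<le> 1 \<longleftrightarrow> (\<forall>a\<in>{w. (v, w) \<in> F}. \<forall>b\<in>{w. (v, w) \<in> F}. a = b)" for v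
    unfolding out_deg_def using card_le_Suc0_iff_eq[OF finite_successors[OF assms]] by simp
  then show ?thesis
    unfolding single_valued_def by auto
qed

lemma out_deg_eq_1:
  assumes "finite F" and "single_valued F" and "v \<in> Domain F"
  shows "out_deg F v = 1"
proof -
  have "out_deg F v \<le> 1"
    using single_valued_iff_out_deg_le_1[OF assms(1)] assms(2) by simp
  moreover have "out_deg F v \<noteq> 0"
    using out_deg_eq_0_iff[OF assms(1)] assms(3) by simp
  ultimately show ?thesis by linarith
qed

lemma wcomp_rel_Image: "F \<subseteq> V \<times> V \<Longrightarrow> x \<in> V \<Longrightarrow> wcomp_rel V F `` {x} = wconn F `` {x}"
  using wconn_closed[of x _ F V] by (auto simp: wcomp_rel_def)

lemma quotient_wcomp_rel: "F \<subseteq> V \<times> V \<Longrightarrow> V // wcomp_rel V F = (\<lambda>x. wconn F `` {x}) ` V"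
  by (auto simp: quotient_def wcomp_rel_Image)

lemma wconn_Image_arc_iff: "(a, b) \<in> F \<Longrightarrow> a \<in> wconn F `` {x} \<longleftrightarrow> b \<in> wconn F `` {x}"
  by (auto intro: rtrancl_into_rtrancl)

lemma out_deg_restrict_class:
  assumes "C = wconn F `` {x}" and "u \<in> C"
  shows "out_deg (Restr F C) u = out_deg F u"
proof -
  have "{w. (u, w) \<in> Restr F C} = {w. (u, w) \<in> F}"
    using assms wconn_Image_arc_iff[of u _ F x] by auto
  then show ?thesis
    by (simp add: out_deg_def)
qed

lemma wconn_restrict_class:
  assumes C: "C = wconn F `` {x}" and "y \<in> C" and "z \<in> C"
  shows "(y, z) \<in> wconn (Restr F C)"
proof -
  have "(y, x) \<in> wconn F" "(x, z) \<in> wconn F"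
    using assms wconn_sym by auto
  then have "(y, z) \<in> wconn F"
    by (rule rtrancl_trans)
  then show ?thesis
  proof (induction rule: rtrancl_induct)
    case base
    then show ?case by simp
  next
    case (step z w)
    have "z \<in> C"
      using \<open>y \<in> C\<close> step.hyps(1) C by (auto intro: rtrancl_trans)
    then have "w \<in> C"
      using step.hyps(2) wconn_Image_arc_iff[of _ _ F x] C by auto
    then have "(z, w) \<in> Restr F C \<union> (Restr F C)\<inverse>"
      using \<open>z \<in> C\<close> step.hyps(2) by auto
    then show ?case
      using step.IH by (rule rtrancl_into_rtrancl[rotated])
  qed
qed

lemma converging_tree_class_iff:
  assumes C: "C = wconn F `` {x}"
  shows "converging_tree C (Restr F C) \<longleftrightarrow> (\<exists>r\<in>C. out_deg F r = 0 \<and> (\<forall>v\<in>C - {r}. out_deg F v = 1))"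
proof -
  have "x \<in> C"
    using C by simp
  moreover have "\<forall>y\<in>C. \<forall>z\<in>C. (y, z) \<in> wconn (Restr F C)"
    using wconn_restrict_class[OF C] by blast
  moreover have "out_deg (Restr F C) v = out_deg F v" if "v \<in> C" for v
    using out_deg_restrict_class[OF C that] .
  ultimately show ?thesis
    unfolding converging_tree_def by auto
qed

lemma single_valued_class_root_iff:
  assumes fin: "finite F" and sv: "single_valued F" and C: "C = wconn F `` {x}"
  shows "(\<exists>r\<in>C. out_deg F r = 0 \<and> (\<forall>v\<in>C - {r}. out_deg F v = 1)) \<longleftrightarrow>
    (\<exists>r. (x, r) \<in> F\<^sup>* \<and> r \<notin> Domain F)"
proof
  assume "\<exists>r\<in>C. out_deg F r = 0 \<and> (\<forall>v\<in>C - {r}. out_deg F v = 1)"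
  then obtain r where "r \<in> C" and "out_deg F r = 0"
    by blast
  then have "(x, r) \<in> wconn F" and "r \<notin> Domain F"
    using C out_deg_eq_0_iff[OF fin] by simp_all
  then show "\<exists>r. (x, r) \<in> F\<^sup>* \<and> r \<notin> Domain F"
    using single_valued_wconn_to_sink[OF sv] by blast
next
  assume "\<exists>r. (x, r) \<in> F\<^sup>* \<and> r \<notin> Domain F"
  then obtain r where xr: "(x, r) \<in> F\<^sup>*" and r: "r \<notin> Domain F"
    by blast
  have "r \<in> C"
    using xr rtrancl_subset_wconn C by blast
  moreover have "out_deg F v = 1" if v: "v \<in> C - {r}" for v
  proof -
    have "(v, x) \<in> wconn F"
      using v C by (simp add: wconn_sym)
    moreover have "(x, r) \<in> wconn F"
      using xr rtrancl_subset_wconn by blast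
    ultimately have "(v, r) \<in> wconn F"
      by (rule rtrancl_trans)
    then have "v \<in> Domain F"
      using single_valued_wconn_sinks_eq[OF sv _ _ r] v by blast
    then show ?thesis
      by (rule out_deg_eq_1[OF fin sv])
  qed
  ultimately show "\<exists>r\<in>C. out_deg F r = 0 \<and> (\<forall>v\<in>C - {r}. out_deg F v = 1)"
    using r out_deg_eq_0_iff[OF fin] by blast
qed

section \<open>In-forests as functional digraphs\<close>

text \<open>The roots of F are the vertices outside Domain F.\<close>

definition forest_on :: "'a set \<Rightarrow> ('a \<times> 'a) set \<Rightarrow> bool" where
  "forest_on V F \<longleftrightarrow> F \<subseteq> V \<times> V \<and> finite F \<and> single_valued F \<and>
     (\<forall>x\<in>V. \<exists>r. (x, r) \<in> F\<^sup>* \<and> r \<notin> Domain F)"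

lemma single_valued_if_class_roots:
  assumes fin: "finite F" and FV: "F \<subseteq> V \<times> V"
    and roots: "\<forall>x\<in>V. \<exists>r\<in>wconn F `` {x}. out_deg F r = 0 \<and> (\<forall>v\<in>wconn F `` {x} - {r}. out_deg F v = 1)"
  shows "single_valued F"
proof -
  have "out_deg F v \<le> 1" for v
  proof (cases "v \<in> V")
    case True
    then obtain r where "out_deg F r = 0" and "\<forall>u\<in>wconn F `` {v} - {r}. out_deg F u = 1"
      using roots by blast
    then show ?thesis
      by (cases "v = r") auto
  next
    case False
    then have "v \<notin> Domain F"
      using FV by blast
    then show ?thesis
      using out_deg_eq_0_iff[OF fin, of v] by simp
  qed
  then show ?thesis
    using single_valued_iff_out_deg_le_1[OF fin] by blast
qed

lemma in_forest_iff_forest_on: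
  assumes "finite V" and "E \<subseteq> V \<times> V"
  shows "in_forest V E F \<longleftrightarrow> F \<subseteq> E \<and> forest_on V F"
proof (cases "F \<subseteq> E")
  case False
  then show ?thesis
    by (simp add: in_forest_def)
next
  case True
  then have FV: "F \<subseteq> V \<times> V"
    using assms(2) by blast
  then have fin: "finite F"
    using assms(1) by (simp add: finite_subset)
  let ?C = "\<lambda>x. wconn F `` {x}"
  let ?has_root = "\<lambda>x. \<exists>r\<in>?C x. out_deg F r = 0 \<and> (\<forall>v\<in>?C x - {r}. out_deg F v = 1)"
  have "in_forest V E F \<longleftrightarrow> (\<forall>x\<in>V. ?has_root x)"
    using True by (simp add: in_forest_def quotient_wcomp_rel[OF FV] converging_tree_class_iff[OF refl])
  also have "\<dots> \<longleftrightarrow> single_valued F \<and> (\<forall>x\<in>V. \<exists>r. (x, r) \<in> F\<^sup>* \<and> r \<notin> Domain F)"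
    using single_valued_if_class_roots[OF fin FV] single_valued_class_root_iff[OF fin _ refl] by blast
  finally show ?thesis
    unfolding forest_on_def using True FV fin by blast
qed

lemma forest_on_rtrancl_closed:
  assumes "forest_on V F" and "(x, y) \<in> F\<^sup>*" and "x \<in> V"
  shows "y \<in> V"
proof -
  have "(x, y) \<in> wconn F"
    using assms(2) rtrancl_subset_wconn ..
  moreover have "F \<subseteq> V \<times> V"
    using assms(1) by (simp add: forest_on_def)
  ultimately show ?thesis
    using assms(3) by (rule wconn_closed)
qed

lemma in_tree_with_root_iff:
  assumes F: "forest_on V F" and "x \<in> V"
  shows "in_tree_with_root V F x r \<longleftrightarrow> (x, r) \<in> F\<^sup>* \<and> r \<notin> Domain F"
proof -
  have fin: "finite F" and sv: "single_valued F"
    using F by (simp_all add: forest_on_def)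
  have "in_tree_with_root V F x r \<longleftrightarrow> (x, r) \<in> wconn F \<and> r \<in> V \<and> r \<notin> Domain F"
    using assms(2) by (auto simp: in_tree_with_root_def wcomp_rel_def out_deg_eq_0_iff[OF fin])
  also have "\<dots> \<longleftrightarrow> (x, r) \<in> F\<^sup>* \<and> r \<notin> Domain F"
  proof
    assume "(x, r) \<in> wconn F \<and> r \<in> V \<and> r \<notin> Domain F"
    then show "(x, r) \<in> F\<^sup>* \<and> r \<notin> Domain F"
      using single_valued_wconn_to_sink[OF sv] by simp
  next
    assume "(x, r) \<in> F\<^sup>* \<and> r \<notin> Domain F"
    then show "(x, r) \<in> wconn F \<and> r \<in> V \<and> r \<notin> Domain F"
      using rtrancl_subset_wconn forest_on_rtrancl_closed[OF F _ assms(2)] by auto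
  qed
  finally show ?thesis .
qed

lemma num_trees_forest_on:
  assumes F: "forest_on V F"
  shows "num_trees V F = card (V - Domain F)"
proof -
  have FV: "F \<subseteq> V \<times> V" and sv: "single_valued F"
    and roots: "\<forall>x\<in>V. \<exists>r. (x, r) \<in> F\<^sup>* \<and> r \<notin> Domain F"
    using F by (simp_all add: forest_on_def)
  have "wconn F `` {x} \<in> (\<lambda>r. wconn F `` {r}) ` (V - Domain F)" if x: "x \<in> V" for x
  proof -
    obtain r where xr: "(x, r) \<in> F\<^sup>*" and r: "r \<notin> Domain F"
      using roots x by blast
    have "r \<in> V"
      using forest_on_rtrancl_closed[OF F xr x] .
    moreover have "wconn F `` {x} = wconn F `` {r}"
      using xr rtrancl_subset_wconn by (intro wconn_Image_eq) (rule subsetD)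
    ultimately show ?thesis
      using r by blast
  qed
  then have "V // wcomp_rel V F = (\<lambda>r. wconn F `` {r}) ` (V - Domain F)"
    by (auto simp: quotient_wcomp_rel[OF FV])
  moreover have "inj_on (\<lambda>r. wconn F `` {r}) (V - Domain F)"
  proof (rule inj_onI)
    fix a b
    assume a: "a \<in> V - Domain F" and b: "b \<in> V - Domain F"
      and "wconn F `` {a} = wconn F `` {b}"
    then have "b \<in> wconn F `` {a}"
      by simp
    then have "(a, b) \<in> wconn F"
      by simp
    then show "a = b"
      using single_valued_wconn_sinks_eq[OF sv] a b by blast
  qed
  ultimately show ?thesis
    unfolding num_trees_def by (simp add: card_image)
qed

section \<open>Attaching roots to a new sink\<close>

lemma rtrancl_attach_sink_iff:
  assumes "g \<notin> Domain F" and "g \<notin> R" and "y \<noteq> g"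
  shows "(x, y) \<in> (F \<union> R \<times> {g})\<^sup>* \<longleftrightarrow> (x, y) \<in> F\<^sup>*"
proof
  assume "(x, y) \<in> (F \<union> R \<times> {g})\<^sup>*"
  then show "(x, y) \<in> F\<^sup>*"
    using \<open>y \<noteq> g\<close>
  proof (induction rule: rtrancl_induct)
    case base
    then show ?case by simp
  next
    case (step y z)
    have "y \<noteq> g"
      using step.hyps(2) assms(1,2) by blast
    then have "(x, y) \<in> F\<^sup>*"
      by (rule step.IH)
    moreover have "(y, z) \<in> F"
      using step.hyps(2) step.prems by blast
    ultimately show ?case
      by (rule rtrancl_into_rtrancl)
  qed
next
  assume "(x, y) \<in> F\<^sup>*"
  then show "(x, y) \<in> (F \<union> R \<times> {g})\<^sup>*"
    using rtrancl_mono[of F "F \<union> R \<times> {g}"] by blast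
qed

lemma forest_on_attach_sink:
  assumes F: "forest_on V F" and "g \<notin> V" and "finite R" and R: "R \<subseteq> V - Domain F"
  shows "forest_on (insert g V) (F \<union> R \<times> {g})"
proof -
  let ?G = "F \<union> R \<times> {g}"
  have FV: "F \<subseteq> V \<times> V" and fin: "finite F" and sv: "single_valued F"
    and roots: "\<forall>x\<in>V. \<exists>r. (x, r) \<in> F\<^sup>* \<and> r \<notin> Domain F"
    using F by (simp_all add: forest_on_def)
  have g: "g \<notin> Domain ?G"
    using FV R \<open>g \<notin> V\<close> by blast
  have "single_valued ?G"
    using sv R by (auto simp: single_valued_def)
  moreover have "\<exists>r. (x, r) \<in> ?G\<^sup>* \<and> r \<notin> Domain ?G" if x: "x \<in> insert g V" for x
  proof (cases "x = g")
    case True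
    then show ?thesis
      using g by blast
  next
    case False
    then obtain r where xr: "(x, r) \<in> F\<^sup>*" and r: "r \<notin> Domain F"
      using roots x by blast
    have xrG: "(x, r) \<in> ?G\<^sup>*"
      using xr rtrancl_mono[of F ?G] by blast
    show ?thesis
    proof (cases "r \<in> R")
      case True
      then have "(x, g) \<in> ?G\<^sup>*"
        using xrG by (simp add: rtrancl_into_rtrancl)
      then show ?thesis
        using g by blast
    next
      case False
      then show ?thesis
        using xrG r by blast
    qed
  qed
  ultimately show ?thesis
    using FV fin R \<open>finite R\<close> unfolding forest_on_def by blast
qed

lemma Restr_Un_arcs_into_sink:
  assumes "G \<subseteq> insert g V \<times> insert g V" and "g \<notin> Domain G"
  shows "Restr G V \<union> {r. (r, g) \<in> G} \<times> {g} = G"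
  using assms by auto

lemma forest_on_detach_sink:
  assumes G: "forest_on (insert g V) G" and "g \<notin> V" and "g \<notin> Domain G"
  shows "forest_on V (Restr G V)" and "{r. (r, g) \<in> G} \<subseteq> V - Domain (Restr G V)"
proof -
  let ?F = "Restr G V" and ?R = "{r. (r, g) \<in> G}"
  have GV: "G \<subseteq> insert g V \<times> insert g V" and fin: "finite G" and sv: "single_valued G"
    and roots: "\<forall>x\<in>insert g V. \<exists>r. (x, r) \<in> G\<^sup>* \<and> r \<notin> Domain G"
    using G by (simp_all add: forest_on_def)
  show R: "?R \<subseteq> V - Domain ?F"
    using sv GV \<open>g \<notin> V\<close> \<open>g \<notin> Domain G\<close> by (auto simp: single_valued_def)
  have reach: "(x, y) \<in> ?F\<^sup>*" if "(x, y) \<in> G\<^sup>*" and "y \<noteq> g" for x y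
    using rtrancl_attach_sink_iff[of g ?F ?R y x, unfolded Restr_Un_arcs_into_sink[OF GV \<open>g \<notin> Domain G\<close>]]
      that \<open>g \<notin> Domain G\<close> by auto
  have "\<exists>r. (x, r) \<in> ?F\<^sup>* \<and> r \<notin> Domain ?F" if x: "x \<in> V" for x
  proof -
    obtain r where xr: "(x, r) \<in> G\<^sup>*" and r: "r \<notin> Domain G"
      using roots x by blast
    show ?thesis
    proof (cases "r = g")
      case False
      then show ?thesis
        using reach[OF xr] r by blast
    next
      case True
      have "x \<noteq> g"
        using x \<open>g \<notin> V\<close> by blast
      then obtain y where xy: "(x, y) \<in> G\<^sup>*" and yg: "(y, g) \<in> G"
        using xr True by (auto elim: rtranclE)
      have "y \<noteq> g"
        using yg \<open>g \<notin> Domain G\<close> by blast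
      then show ?thesis
        using reach[OF xy] yg R by blast
    qed
  qed
  then show "forest_on V ?F"
    using fin sv unfolding forest_on_def by (auto intro: single_valued_subset)
qed

section \<open>The ground extension\<close>

lemma Domain_ground_arcs: "Domain (ground_arcs V W) \<subseteq> V"
  by (auto simp: ground_arcs_def arcs_of_def)

lemma sg_weight_attach_ground:
  assumes "finite F" and "F \<subseteq> V \<times> V" and "0 \<notin> V" and "finite R"
  shows "sg_weight (ground_weight W) (F \<union> R \<times> {0}) = sg_weight W F"
proof -
  have "F \<inter> R \<times> {0} = {}"
    using assms(2,3) by blast
  then have "sg_weight (ground_weight W) (F \<union> R \<times> {0}) =
      sg_weight (ground_weight W) F * sg_weight (ground_weight W) (R \<times> {0})"
    unfolding sg_weight_def using assms(1,4) by (simp add: prod.union_disjoint)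
  moreover have "sg_weight (ground_weight W) F = sg_weight W F"
    unfolding sg_weight_def using assms(2,3)
    by (intro prod.cong) (auto simp: ground_weight_def)
  moreover have "sg_weight (ground_weight W) (R \<times> {0}) = 1"
    unfolding sg_weight_def by (intro prod.neutral) (auto simp: ground_weight_def)
  ultimately show ?thesis
    by simp
qed

locale ground_extension =
  fixes V :: "nat set" and W :: "nat \<Rightarrow> nat \<Rightarrow> real" and K :: "nat set" and I J :: "nat \<Rightarrow> nat"
  assumes finite_V: "finite V" and zero_notin_V: "0 \<notin> V" and inj_J: "inj_on J K"
    and J_in_V: "J ` K \<subseteq> V" and I_in_V: "I ` K \<subseteq> V"
begin

definition forests :: "(nat \<times> nat) set set" where
  "forests = {F. in_forest V (arcs_of V W) F \<and> (\<forall>u\<in>K. in_tree_with_root V F (I u) (J u))}"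

definition ground_forests :: "(nat \<times> nat) set set" where
  "ground_forests = {G. in_forest (ground_vertices V) (ground_arcs V W) G \<and>
     num_trees (ground_vertices V) G = card K + 1 \<and>
     in_tree_with_root (ground_vertices V) G 0 0 \<and>
     (\<forall>u\<in>K. in_tree_with_root (ground_vertices V) G (I u) (J u))}"

definition ground :: "(nat \<times> nat) set \<Rightarrow> (nat \<times> nat) set" where
  "ground F = F \<union> (V - Domain F - J ` K) \<times> {0}"

lemma mem_forests_iff:
  "F \<in> forests \<longleftrightarrow> F \<subseteq> arcs_of V W \<and> forest_on V F \<and> (\<forall>u\<in>K. (I u, J u) \<in> F\<^sup>* \<and> J u \<notin> Domain F)"
proof -
  have "in_forest V (arcs_of V W) F \<longleftrightarrow> F \<subseteq> arcs_of V W \<and> forest_on V F"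
    using finite_V by (rule in_forest_iff_forest_on) (auto simp: arcs_of_def)
  moreover have "in_tree_with_root V F (I u) (J u) \<longleftrightarrow> (I u, J u) \<in> F\<^sup>* \<and> J u \<notin> Domain F"
    if "forest_on V F" and "u \<in> K" for u
    using in_tree_with_root_iff[OF that(1)] I_in_V that(2) by blast
  ultimately show ?thesis
    unfolding forests_def by auto
qed

lemma mem_ground_forests_iff:
  "G \<in> ground_forests \<longleftrightarrow> G \<subseteq> ground_arcs V W \<and> forest_on (insert 0 V) G \<and>
     card (insert 0 V - Domain G) = card K + 1 \<and> (\<forall>u\<in>K. (I u, J u) \<in> G\<^sup>* \<and> J u \<notin> Domain G)"
proof -
  have "in_forest (insert 0 V) (ground_arcs V W) G \<longleftrightarrow> G \<subseteq> ground_arcs V W \<and> forest_on (insert 0 V) G"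
    using finite_V by (intro in_forest_iff_forest_on) (auto simp: ground_arcs_def arcs_of_def)
  moreover have "in_tree_with_root (insert 0 V) G (I u) (J u) \<longleftrightarrow> (I u, J u) \<in> G\<^sup>* \<and> J u \<notin> Domain G"
    if "forest_on (insert 0 V) G" and "u \<in> K" for u
    using in_tree_with_root_iff[OF that(1)] I_in_V that(2) by blast
  moreover have "in_tree_with_root (insert 0 V) G 0 0"
    if "forest_on (insert 0 V) G" and "G \<subseteq> ground_arcs V W"
    using in_tree_with_root_iff[OF that(1)] Domain_ground_arcs[of V W] zero_notin_V that(2) by blast
  ultimately show ?thesis
    unfolding ground_forests_def ground_vertices_def by (auto simp: num_trees_forest_on)
qed

lemma J_neq_0: "u \<in> K \<Longrightarrow> J u \<noteq> 0"
  using J_in_V zero_notin_V by (metis image_subset_iff)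

lemma card_insert_0_J: "card (insert 0 (J ` K)) = card K + 1"
proof -
  have "finite (J ` K)"
    using J_in_V finite_V by (rule finite_subset)
  moreover have "0 \<notin> J ` K"
    using J_in_V zero_notin_V by blast
  ultimately show ?thesis
    using card_image[OF inj_J] by simp
qed

lemma ground_mem_ground_forests:
  assumes "F \<in> forests"
  shows "ground F \<in> ground_forests"
proof -
  let ?R = "V - Domain F - J ` K"
  have FE: "F \<subseteq> arcs_of V W" and F: "forest_on V F"
    and roots: "\<forall>u\<in>K. (I u, J u) \<in> F\<^sup>* \<and> J u \<notin> Domain F"
    using assms by (simp_all add: mem_forests_iff)
  have FV: "F \<subseteq> V \<times> V"
    using F by (simp add: forest_on_def)
  have "ground F \<subseteq> ground_arcs V W"
    using FE by (auto simp: ground_def ground_arcs_def)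
  moreover have "forest_on (insert 0 V) (ground F)"
    unfolding ground_def using F zero_notin_V finite_V
    by (intro forest_on_attach_sink) auto
  moreover have "Domain (ground F) = Domain F \<union> ?R"
    by (auto simp: ground_def)
  then have "insert 0 V - Domain (ground F) = insert 0 (J ` K)"
    using roots J_in_V zero_notin_V FV by auto
  moreover have "(I u, J u) \<in> (ground F)\<^sup>* \<and> J u \<notin> Domain (ground F)" if "u \<in> K" for u
  proof -
    have "0 \<notin> Domain F" and "0 \<notin> ?R"
      using zero_notin_V FV by auto
    then show ?thesis
      using rtrancl_attach_sink_iff[OF _ _ J_neq_0[OF that]] roots that by (auto simp: ground_def)
  qed
  ultimately show ?thesis
    by (simp add: mem_ground_forests_iff card_insert_0_J)
qed

lemma ground_forests_zero_notin_Domain: "G \<in> ground_forests \<Longrightarrow> 0 \<notin> Domain G"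
  using Domain_ground_arcs[of V W] zero_notin_V by (auto simp: mem_ground_forests_iff)

lemma ground_forests_roots:
  assumes "G \<in> ground_forests"
  shows "insert 0 V - Domain G = insert 0 (J ` K)"
proof -
  have "J ` K \<subseteq> V - Domain G"
    using assms J_in_V by (auto simp: mem_ground_forests_iff)
  then have "insert 0 (J ` K) \<subseteq> insert 0 V - Domain G"
    using ground_forests_zero_notin_Domain[OF assms] by blast
  moreover have "card (insert 0 V - Domain G) = card (insert 0 (J ` K))"
    using assms by (simp add: mem_ground_forests_iff card_insert_0_J)
  ultimately show ?thesis
    using finite_V by (intro card_subset_eq[symmetric]) auto
qed

lemma restrict_mem_forests:
  assumes "G \<in> ground_forests"
  shows "Restr G V \<in> forests"
proof -
  let ?F = "Restr G V" and ?R = "{r. (r, 0) \<in> G}"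
  have GE: "G \<subseteq> ground_arcs V W" and G: "forest_on (insert 0 V) G"
    and roots: "\<forall>u\<in>K. (I u, J u) \<in> G\<^sup>* \<and> J u \<notin> Domain G"
    using assms by (simp_all add: mem_ground_forests_iff)
  have G0: "0 \<notin> Domain G"
    using ground_forests_zero_notin_Domain[OF assms] .
  have GV: "G \<subseteq> insert 0 V \<times> insert 0 V"
    using G by (simp add: forest_on_def)
  have "?F \<subseteq> arcs_of V W"
    using GE zero_notin_V by (auto simp: ground_arcs_def)
  moreover have "forest_on V ?F"
    using forest_on_detach_sink(1)[OF G zero_notin_V G0] .
  moreover have "(I u, J u) \<in> ?F\<^sup>* \<and> J u \<notin> Domain ?F" if "u \<in> K" for u
  proof -
    have "0 \<notin> Domain ?F" and "0 \<notin> ?R"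
      using G0 by auto
    then have "(I u, J u) \<in> G\<^sup>* \<longleftrightarrow> (I u, J u) \<in> ?F\<^sup>*"
      using rtrancl_attach_sink_iff[of 0 ?F ?R "J u" "I u", unfolded Restr_Un_arcs_into_sink[OF GV G0]]
        J_neq_0[OF that] by blast
    then show ?thesis
      using roots that by auto
  qed
  ultimately show ?thesis
    by (simp add: mem_forests_iff)
qed

lemma ground_forests_attached_roots:
  assumes "G \<in> ground_forests"
  shows "V - Domain (Restr G V) - J ` K = {r. (r, 0) \<in> G}"
proof -
  let ?F = "Restr G V" and ?R = "{r. (r, 0) \<in> G}"
  have G: "forest_on (insert 0 V) G"
    using assms by (simp add: mem_ground_forests_iff)
  then have GV: "G \<subseteq> insert 0 V \<times> insert 0 V"
    by (simp add: forest_on_def)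
  have G0: "0 \<notin> Domain G"
    using ground_forests_zero_notin_Domain[OF assms] .
  have R: "?R \<subseteq> V - Domain ?F"
    using forest_on_detach_sink(2)[OF G zero_notin_V G0] .
  have roots: "insert 0 V - Domain G = insert 0 (J ` K)"
    using ground_forests_roots[OF assms] .
  show ?thesis
  proof (intro equalityI subsetI)
    fix r
    assume r: "r \<in> V - Domain ?F - J ` K"
    have "r \<in> Domain G"
    proof (rule ccontr)
      assume "r \<notin> Domain G"
      then have "r \<in> insert 0 (J ` K)"
        using r roots[symmetric] by simp
      then show False
        using r zero_notin_V by auto
    qed
    then show "r \<in> ?R"
      using r GV by auto
  next
    fix r
    assume r: "r \<in> ?R"
    then have "r \<in> Domain G"
      by blast
    then have "r \<notin> J ` K"
      using roots by auto
    then show "r \<in> V - Domain ?F - J ` K"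
      using r R by blast
  qed
qed

lemma ground_restrict:
  assumes "G \<in> ground_forests"
  shows "ground (Restr G V) = G"
proof -
  have GV: "G \<subseteq> insert 0 V \<times> insert 0 V"
    using assms by (simp add: mem_ground_forests_iff forest_on_def)
  have "ground (Restr G V) = Restr G V \<union> {r. (r, 0) \<in> G} \<times> {0}"
    using ground_forests_attached_roots[OF assms] by (simp add: ground_def)
  also have "\<dots> = G"
    using GV ground_forests_zero_notin_Domain[OF assms] by (rule Restr_Un_arcs_into_sink)
  finally show ?thesis .
qed

lemma restrict_ground: "F \<in> forests \<Longrightarrow> Restr (ground F) V = F"
  using zero_notin_V by (auto simp: mem_forests_iff forest_on_def ground_def)

lemma sg_weight_ground:
  assumes "F \<in> forests"
  shows "sg_weight (ground_weight W) (ground F) = sg_weight W F"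
  using assms finite_V zero_notin_V unfolding ground_def
  by (intro sg_weight_attach_ground) (auto simp: mem_forests_iff forest_on_def)

lemma bij_betw_ground: "bij_betw ground forests ground_forests"
  by (rule bij_betw_byWitness[where f' = "\<lambda>G. Restr G V"])
    (auto simp: restrict_ground ground_mem_ground_forests restrict_mem_forests ground_restrict)

end

theorem lemma1:
  fixes n k :: nat and W :: "nat \<Rightarrow> nat \<Rightarrow> real" and I J :: "nat \<Rightarrow> nat"
  assumes "n > 1"
    and "\<forall>i\<in>{1..n}. \<forall>j\<in>{1..n}. W i j \<ge> 0"
    and "\<forall>i\<in>{1..n}. W i i = 0"
    and "k \<le> n"
    and "inj_on I {1..k}" and "I ` {1..k} \<subseteq> {1..n}"
    and "inj_on J {1..k}" and "J ` {1..k} \<subseteq> {1..n}"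
  shows "\<exists>f. bij_betw f
      {F. in_forest {1..n} (arcs_of {1..n} W) F \<and>
          (\<forall>u\<in>{1..k}. in_tree_with_root {1..n} F (I u) (J u))}
      {F. in_forest (ground_vertices {1..n}) (ground_arcs {1..n} W) F \<and>
          num_trees (ground_vertices {1..n}) F = k + 1 \<and>
          in_tree_with_root (ground_vertices {1..n}) F 0 0 \<and>
          (\<forall>u\<in>{1..k}. in_tree_with_root (ground_vertices {1..n}) F (I u) (J u))}
    \<and> (\<forall>F. in_forest {1..n} (arcs_of {1..n} W) F \<and>
          (\<forall>u\<in>{1..k}. in_tree_with_root {1..n} F (I u) (J u)) \<longrightarrow>
          sg_weight (ground_weight W) (f F) = sg_weight W F)"
proof -
  interpret ground_extension "{1..n}" W "{1..k}" I J
    using assms by unfold_locales auto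
  show ?thesis
    using bij_betw_ground sg_weight_ground
    unfolding forests_def ground_forests_def by (intro exI[of _ ground]) simp
qed

end
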